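(* Let $Y=\{Y_t,\ t\in\mathbb{Z}\}$ be an $\mathbb{N}_0$-valued process satisfying $$Y_t\mid\mathcal{F}_{t-1}\sim p(\cdot;\lambda_t(\theta^* )),\qquad \lambda_t(\theta)=f_\theta(Y_{t-1},Y_{t-2},\dots),\qquad \lambda_t(\theta^* )=\mathbb{E}(Y_t\mid\mathcal{F}_{t-1}),$$ where $\mathcal{F}_{t-1}=\sigma(Y_{t-1},Y_{t-2},\dots)$, $p(\cdot;\lambda)$ is an unknown discrete distribution, and for each $\theta$ in a compact $\Theta\subset\mathbb{R}^d$, $f_\theta$ is a non-negative measurable function on $\mathbb{N}_0^{\mathbb{N}}$. Assume $Y$ is strictly stationary and ergodic, that $\mathbb{E}Y_t^{1+\epsilon}<C$ for all $t$ for some $C>0$, $\epsilon>1$, and that assumptions (A0)–(A7) and (A$_i(\Theta)$) for $i=0,1,2$ (stated in the context) hold. Let $(\kappa_n)$ be an increasing sequence with $\kappa_n<n$, $\kappa_n\to\infty$, $\kappa_n=o(n)$ and $$\sum_{\ell\ge1}\frac{1}{\kappa_\ell}\sum_{k\ge\ell}\alpha^{(i)}_k<\infty\quad\text{for } i=0,1,2.$$ Then $$\frac{1}{\kappa_n}\sup_{\theta\in\Theta}\big|\widehat L_n(\theta)-L_n(\theta)\big|\longrightarrow0\quad\text{almost surely as } n\to\infty.$$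
   Context: Models: a model $m$ is a subset of $\{1,\dots,d\}$, $|m|$ its cardinality, $\Theta(m)=\{\theta\in\Theta:\theta_i=0\ \forall i\notin m\}$; $\mathcal{M}$ is a finite family of models containing the true model $m^*$ with $\theta^*\in\Theta(m^* )$. Define $\ell_t(\theta)=Y_t\log\lambda_t(\theta)-\lambda_t(\theta)$, $L_n(\theta)=\sum_{t=1}^n\ell_t(\theta)$, $\widehat\lambda_t(\theta)=f_\theta(Y_{t-1},\dots,Y_1,0,0,\dots)$, $\widehat L_n(\theta)=\sum_{t=1}^n(Y_t\log\widehat\lambda_t(\theta)-\widehat\lambda_t(\theta))$. Assumptions: (A$_i(\Theta)$), $i=0,1,2$: for every $y\in\mathbb{N}_0^{\mathbb{N}}$, $\theta\mapsto f_\theta(y)$ is $i$ times continuously differentiable on $\Theta$ and there is a non-negative sequence $(\alpha^{(i)}_k)_{k\ge1}$ with $\sum_k\alpha^{(0)}_k<1$ (for $i=0$), resp. $\sum_k\alpha^{(i)}_k<\infty$ (for $i=1,2$), such that $\sup_{\theta\in\Theta}\|\partial^if_\theta(y)/\partial\theta^i-\partial^if_\theta(y')/\partial\theta^i\|\le\sum_{k\ge1}\alpha^{(i)}_k|y_k-y'_k|$ for all $y,y'$. (A0) if $f_\theta(Y_{t-1},\dots)=f_{\theta'}(Y_{t-1},\dots)$ a.s. for some $t$ then $\theta=\theta'$; and $\inf_{\theta\in\Theta}f_\theta(y)\ge\underline{c}>0$ for all $y$. (A1) $\theta^*$ is an interior point of $\Theta(m^* )$. (A2) $\theta\mapsto f_\theta(y)$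 is twice continuously differentiable on $\Theta$ for every $y$. (A3) $a_t\to0$ and $Y_ta_t\to0$ as $t\to\infty$, with $a_t=\sup_{\theta\in\Theta}|\widehat\lambda_t(\theta)-\lambda_t(\theta)|$. (A4) $J(\theta^* )=\mathbb{E}\big[\lambda_t(\theta^* )^{-1}\frac{\partial\lambda_t(\theta^* )}{\partial\theta}\frac{\partial\lambda_t(\theta^* )}{\partial\theta'}\big]<\infty$ and $I(\theta^* )=\mathbb{E}\big[\frac{\mathrm{Var}(Y_t\mid\mathcal{F}_{t-1})}{\lambda_t(\theta^* )^2}\frac{\partial\lambda_t(\theta^* )}{\partial\theta}\frac{\partial\lambda_t(\theta^* )}{\partial\theta'}\big]<\infty$. (A5) for $c\in\mathbb{R}^d$, $c'\frac{\partial\lambda_t(\theta^* )}{\partial\theta}=0$ a.s. implies $c=0$. (A6) there is a neighbourhood $V(\theta^* )$ of $\theta^*$ with $\mathbb{E}\big[\sup_{\theta\in V(\theta^* )}|\partial^2\ell_t(\theta)/\partial\theta_i\partial\theta_j|\big]<\infty$ for all $i,j$. (A7) $b_t$, $b_tY_t$ and $a_td_tY_t$ are $O(t^{-h})$ for some $h>1/2$, where $b_t=\sup_{\theta\in\Theta}\mathbb{E}\big\|\frac{\partial\widehat\lambda_t(\theta)}{\partial\theta}-\frac{\partial\lambda_t(\theta)}{\partial\theta}\big\|$ and $d_t=\sup_{\theta\in\Theta}\max\big\{\mathbb{E}\big\|\widehat\lambda_t(\theta)^{-1}\frac{\partial\widehat\lambda_t(\theta)}{\partial\theta}\big\|,\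 \mathbb{E}\big\|\lambda_t(\theta)^{-1}\frac{\partial\lambda_t(\theta)}{\partial\theta}\big\|\big\}$. *)

theory Defs
  imports "HOL-Probability.Probability"
begin

text \<open>Sequences are
  functions nat => nat; the entry at index k (k >= 1) is y_k, the entry at index 0
  is a dummy (irrelevant because of the Lipschitz conditions, which only involve k >= 1).\<close>
definition seqspace :: "(nat \<Rightarrow> nat) measure" where
  "seqspace = PiM UNIV (\<lambda>_. count_space UNIV)"

definition past :: "(int \<Rightarrow> 'a \<Rightarrow> nat) \<Rightarrow> int \<Rightarrow> 'a \<Rightarrow> nat \<Rightarrow> nat" where
  "past Y t \<omega> = (\<lambda>k. if k = 0 then 0 else Y (t - int k) \<omega>)"

definition trunc_past :: "(int \<Rightarrow> 'a \<Rightarrow> nat) \<Rightarrow> nat \<Rightarrow> 'a \<Rightarrow> nat \<Rightarrow> nat" where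
  "trunc_past Y t \<omega> = (\<lambda>k. if 1 \<le> k \<and> k < t then Y (int t - int k) \<omega> else 0)"

definition lam :: "('p \<Rightarrow> (nat \<Rightarrow> nat) \<Rightarrow> real) \<Rightarrow> (int \<Rightarrow> 'a \<Rightarrow> nat) \<Rightarrow> 'p \<Rightarrow> int \<Rightarrow> 'a \<Rightarrow> real" where
  "lam f Y \<theta> t \<omega> = f \<theta> (past Y t \<omega>)"

definition lamhat :: "('p \<Rightarrow> (nat \<Rightarrow> nat) \<Rightarrow> real) \<Rightarrow> (int \<Rightarrow> 'a \<Rightarrow> nat) \<Rightarrow> 'p \<Rightarrow> nat \<Rightarrow> 'a \<Rightarrow> real" where
  "lamhat f Y \<theta> t \<omega> = f \<theta> (trunc_past Y t \<omega>)"

definition Ln :: "('p \<Rightarrow> (nat \<Rightarrow> nat) \<Rightarrow> real) \<Rightarrow> (int \<Rightarrow> 'a \<Rightarrow> nat) \<Rightarrow> 'p \<Rightarrow> nat \<Rightarrow> 'a \<Rightarrow> real" where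
  "Ln f Y \<theta> n \<omega> = (\<Sum>t=1..n. real (Y (int t) \<omega>) * ln (lam f Y \<theta> (int t) \<omega>) - lam f Y \<theta> (int t) \<omega>)"

definition Lnhat :: "('p \<Rightarrow> (nat \<Rightarrow> nat) \<Rightarrow> real) \<Rightarrow> (int \<Rightarrow> 'a \<Rightarrow> nat) \<Rightarrow> 'p \<Rightarrow> nat \<Rightarrow> 'a \<Rightarrow> real" where
  "Lnhat f Y \<theta> n \<omega> = (\<Sum>t=1..n. real (Y (int t) \<omega>) * ln (lamhat f Y \<theta> t \<omega>) - lamhat f Y \<theta> t \<omega>)"

definition Fpast :: "'a measure \<Rightarrow> (int \<Rightarrow> 'a \<Rightarrow> nat) \<Rightarrow> int \<Rightarrow> 'a measure" where
  "Fpast M Y t = sigma (space M) {Y s -` A \<inter> space M | s A. s < t}"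

definition strictly_stationary :: "'a measure \<Rightarrow> (int \<Rightarrow> 'a \<Rightarrow> nat) \<Rightarrow> bool" where
  "strictly_stationary M Y \<longleftrightarrow>
     (\<forall>(n::nat) (ts::nat \<Rightarrow> int) (h::int).
        distr M (PiM {..<n} (\<lambda>_. count_space UNIV)) (\<lambda>\<omega>. \<lambda>i\<in>{..<n}. Y (ts i) \<omega>)
      = distr M (PiM {..<n} (\<lambda>_. count_space UNIV)) (\<lambda>\<omega>. \<lambda>i\<in>{..<n}. Y (ts i + h) \<omega>))"

definition ergodic_process :: "'a measure \<Rightarrow> (int \<Rightarrow> 'a \<Rightarrow> nat) \<Rightarrow> bool" where
  "ergodic_process M Y \<longleftrightarrow>
     (\<forall>A \<in> sets (PiM (UNIV::int set) (\<lambda>_. count_space (UNIV::nat set))).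
        (\<forall>x. x \<in> A \<longleftrightarrow> (\<lambda>t. x (t + 1)) \<in> A) \<longrightarrow>
        measure M {\<omega> \<in> space M. (\<lambda>t. Y t \<omega>) \<in> A} \<in> {0, 1})"

text \<open>Lipschitz-type bound: norm (g y - g y') <= sum_{k>=1} alpha_k |y_k - y'_k|
  for all y, y' (trivially true when the right-hand side is infinite).\<close>
definition seq_lipschitz :: "(nat \<Rightarrow> real) \<Rightarrow> ((nat \<Rightarrow> nat) \<Rightarrow> 'b::real_normed_vector) \<Rightarrow> bool" where
  "seq_lipschitz \<alpha> g \<longleftrightarrow>
     (\<forall>y y'. summable (\<lambda>k. \<alpha> (Suc k) * \<bar>real (y (Suc k)) - real (y' (Suc k))\<bar>) \<longrightarrow>
        norm (g y - g y') \<le> (\<Sum>k. \<alpha> (Suc k) * \<bar>real (y (Suc k)) - real (y' (Suc k))\<bar>))"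

text \<open>Second partial derivative d^2 l_t(theta) / d theta_i d theta_j, where
  l_t(theta) = Y_t log lambda_t(theta) - lambda_t(theta), written in terms of the gradient Df
  and Hessian D2f of theta |-> f_theta(y).\<close>
definition ell_hess ::
  "('p \<Rightarrow> (nat \<Rightarrow> nat) \<Rightarrow> real) \<Rightarrow> ('p \<Rightarrow> (nat \<Rightarrow> nat) \<Rightarrow> real^'d) \<Rightarrow>
   ('p \<Rightarrow> (nat \<Rightarrow> nat) \<Rightarrow> real^'d^'d) \<Rightarrow> (int \<Rightarrow> 'a \<Rightarrow> nat) \<Rightarrow> 'p \<Rightarrow> int \<Rightarrow> 'a \<Rightarrow> 'd \<Rightarrow> 'd \<Rightarrow> real" where
  "ell_hess f Df D2f Y \<theta> t \<omega> i j =
     (let y = past Y t \<omega>; l = f \<theta> y; Yt = real (Y t \<omega>) in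
        (Yt / l - 1) * (D2f \<theta> y $ i $ j) - Yt / l\<^sup>2 * (Df \<theta> y $ i) * (Df \<theta> y $ j))"

end

theory Submission
  imports Defs
begin

(* Only the Lipschitz condition (A_0(Theta)) on f_theta, its lower bound c and the moment bound
   are needed.  Since lambda |-> y log lambda - lambda is (y/c + 1)-Lipschitz on [c, oo), the t-th
   summand of hat L_n - L_n is bounded, uniformly in theta, by
   x_t = (Y_t/c + 1) sum_{k >= t} alpha_k Y_{t-k}.  The moment bound gives
   E x_t <= const * sum_{k >= t} alpha_k, so the summability hypothesis on kappa makes sum_t x_t / kappa_t
   integrable, hence almost surely finite, and Kronecker's lemma yields
   (sum_{t <= n} x_t) / kappa_n -> 0. *)

lemma kronecker_lemma_nonneg:
  fixes x \<kappa> :: "nat \<Rightarrow> real"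
  assumes x_nonneg: "\<And>l. 0 \<le> x l" and \<kappa>_mono: "incseq \<kappa>"
    and \<kappa>_pos: "\<And>n. n \<ge> 1 \<Longrightarrow> 0 < \<kappa> n" and \<kappa>_inf: "filterlim \<kappa> at_top sequentially"
    and summable: "summable (\<lambda>l. x l / \<kappa> (Suc l))"
  shows "(\<lambda>n. (\<Sum>l<n. x l) / \<kappa> n) \<longlonglongrightarrow> 0"
proof (rule LIMSEQ_I)
  fix r :: real assume r: "0 < r"
  define g where "g l = x l / \<kappa> (Suc l)" for l
  have g_nonneg: "0 \<le> g l" for l unfolding g_def using x_nonneg \<kappa>_pos[of "Suc l"] by simp
  obtain m where tail: "\<And>n. n \<ge> m \<Longrightarrow> norm (\<Sum>i. g (i + n)) < r/2"
    using suminf_exist_split[of "r/2" g] r summable unfolding g_def by auto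
  define S where "S = (\<Sum>l<m. x l)"
  obtain N where N: "\<And>n. n \<ge> N \<Longrightarrow> \<kappa> n \<ge> 2*S/r + 1"
    using \<kappa>_inf by (auto simp: filterlim_at_top eventually_sequentially)
  show "\<exists>no. \<forall>n\<ge>no. norm ((\<Sum>l<n. x l) / \<kappa> n - 0) < r"
  proof (intro exI allI impI)
    fix n assume n: "max (max N m) 1 \<le> n"
    have \<kappa>n: "0 < \<kappa> n" using \<kappa>_pos n by simp
    have head: "S / \<kappa> n < r/2"
    proof -
      have "2*S + r \<le> r * \<kappa> n" using N[of n] n r by (simp add: field_simps)
      thus ?thesis using \<kappa>n r by (simp add: field_simps)
    qed
    have "(\<Sum>l\<in>{m..<n}. x l) / \<kappa> n = (\<Sum>l\<in>{m..<n}. x l / \<kappa> n)"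
      by (simp add: sum_divide_distrib)
    also have "\<dots> \<le> (\<Sum>l\<in>{m..<n}. g l)"
    proof (rule sum_mono)
      fix l assume "l \<in> {m..<n}"
      then have "\<kappa> (Suc l) \<le> \<kappa> n" using \<kappa>_mono by (simp add: incseq_def)
      then show "x l / \<kappa> n \<le> g l"
        unfolding g_def using x_nonneg[of l] \<kappa>_pos[of "Suc l"] by (simp add: frac_le)
    qed
    also have "\<dots> = (\<Sum>i<n-m. g (i + m))"
      using n by (intro sum.reindex_bij_witness[of _ "\<lambda>i. i + m" "\<lambda>l. l - m"]) auto
    also have "\<dots> \<le> (\<Sum>i. g (i + m))"
      using summable unfolding g_def[symmetric]
      by (intro sum_le_suminf) (auto simp: g_nonneg)
    also have "\<dots> < r/2" using tail[of m] abs_ge_self[of "\<Sum>i. g (i + m)"] by simp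
    finally have rest: "(\<Sum>l\<in>{m..<n}. x l) / \<kappa> n < r/2" .
    have "(\<Sum>l<n. x l) = S + (\<Sum>l\<in>{m..<n}. x l)"
      unfolding S_def using n by (metis lessThan_atLeast0 max.bounded_iff sum.atLeastLessThan_concat zero_le)
    then have "(\<Sum>l<n. x l) / \<kappa> n = S / \<kappa> n + (\<Sum>l\<in>{m..<n}. x l) / \<kappa> n"
      by (simp add: add_divide_distrib)
    moreover have "0 \<le> (\<Sum>l<n. x l) / \<kappa> n" using \<kappa>n by (simp add: sum_nonneg x_nonneg)
    ultimately have "norm ((\<Sum>l<n. x l) / \<kappa> n - 0) = S / \<kappa> n + (\<Sum>l\<in>{m..<n}. x l) / \<kappa> n"
      by simp
    with head rest show "norm ((\<Sum>l<n. x l) / \<kappa> n - 0) < r" by linarith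
  qed
qed

lemma abs_ln_diff_le:
  fixes a b c :: real
  assumes "0 < c" "c \<le> a" "c \<le> b"
  shows "\<bar>ln a - ln b\<bar> \<le> \<bar>a - b\<bar> / c"
proof -
  have "ln u - ln v \<le> \<bar>u - v\<bar> / c" if "c \<le> u" "c \<le> v" for u v
  proof -
    have "ln (u/v) \<le> u/v - 1" using that assms by (intro ln_le_minus_one) auto
    then have "ln u - ln v \<le> (u - v)/v" using that assms by (simp add: ln_div diff_divide_distrib)
    also have "\<dots> \<le> \<bar>u - v\<bar> / c" using that assms by (simp add: frac_le)
    finally show ?thesis .
  qed
  from this[of a b] this[of b a] show ?thesis using assms by (simp add: abs_minus_commute abs_le_iff)
qed

lemma abs_poisson_loglik_diff_le:
  fixes a b c y :: real
  assumes "0 < c" "c \<le> a" "c \<le> b" "0 \<le> y"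
  shows "\<bar>(y * ln a - a) - (y * ln b - b)\<bar> \<le> (y/c + 1) * \<bar>a - b\<bar>"
proof -
  have "\<bar>(y * ln a - a) - (y * ln b - b)\<bar> = \<bar>y * (ln a - ln b) - (a - b)\<bar>"
    by (simp add: algebra_simps)
  also have "\<dots> \<le> y * \<bar>ln a - ln b\<bar> + \<bar>a - b\<bar>"
    using abs_triangle_ineq4[of "y * (ln a - ln b)" "a - b"] assms(4) by (simp add: abs_mult)
  also have "y * \<bar>ln a - ln b\<bar> \<le> y * (\<bar>a - b\<bar> / c)"
    using abs_ln_diff_le[OF assms(1-3)] assms(4) by (rule mult_left_mono)
  finally show ?thesis by (simp add: algebra_simps)
qed

lemma le_one_plus_powr:
  fixes u \<epsilon> :: real
  assumes "0 \<le> u" "1 \<le> \<epsilon>"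
  shows "u \<le> 1 + u powr (1 + \<epsilon>)" and "u\<^sup>2 \<le> 1 + u powr (1 + \<epsilon>)"
proof -
  have "u powr p \<le> 1 + u powr (1 + \<epsilon>)" if "0 < p" "p \<le> 1 + \<epsilon>" for p
  proof (cases "u \<le> 1")
    case True
    then have "u powr p \<le> 1" using assms that by (metis powr_mono2 powr_one_eq_one less_imp_le)
    then show ?thesis using powr_ge_zero[of u "1 + \<epsilon>"] by linarith
  next
    case False
    then have "u powr p \<le> u powr (1 + \<epsilon>)" using that by (intro powr_mono) auto
    then show ?thesis by simp
  qed
  from this[of 1] this[of 2] show "u \<le> 1 + u powr (1 + \<epsilon>)" "u\<^sup>2 \<le> 1 + u powr (1 + \<epsilon>)"
    using assms by simp_all
qed

lemma mult_le_powr_moments: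
  fixes a b c \<epsilon> :: real
  assumes "0 \<le> a" "0 \<le> b" "0 < c" "1 \<le> \<epsilon>"
  shows "(a/c + 1) * b \<le> (1/c + 1) * (2 + a powr (1 + \<epsilon>) + b powr (1 + \<epsilon>))"
proof -
  define Q where "Q = 2 + a powr (1 + \<epsilon>) + b powr (1 + \<epsilon>)"
  have "a * b \<le> a\<^sup>2 + b\<^sup>2"
    using sum_squares_bound[of a b] mult_nonneg_nonneg[OF assms(1,2)] by linarith
  then have ab: "a * b \<le> Q"
    unfolding Q_def using le_one_plus_powr(2)[OF assms(1,4)] le_one_plus_powr(2)[OF assms(2,4)] by simp
  have b: "b \<le> Q"
    unfolding Q_def using le_one_plus_powr(1)[OF assms(2,4)] powr_ge_zero[of a "1 + \<epsilon>"] by linarith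
  have "(a/c + 1) * b = (a * b)/c + b" by (simp add: field_simps)
  also have "\<dots> \<le> Q/c + Q" using ab b assms(3) by (intro add_mono divide_right_mono) auto
  also have "\<dots> = (1/c + 1) * Q" by (simp add: field_simps)
  finally show ?thesis unfolding Q_def .
qed

lemma (in prob_space) nn_integral_mixed_moment_le:
  fixes X Z :: "'a \<Rightarrow> real"
  assumes [measurable]: "X \<in> borel_measurable M" "Z \<in> borel_measurable M"
    and nonneg: "\<And>\<omega>. 0 \<le> X \<omega>" "\<And>\<omega>. 0 \<le> Z \<omega>" and "0 < c" "1 \<le> \<epsilon>" "0 \<le> C"
    and moment_X: "(\<integral>\<^sup>+\<omega>. ennreal (X \<omega> powr (1 + \<epsilon>)) \<partial>M) \<le> ennreal C"
    and moment_Z: "(\<integral>\<^sup>+\<omega>. ennreal (Z \<omega> powr (1 + \<epsilon>)) \<partial>M) \<le> ennreal C"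
  shows "(\<integral>\<^sup>+\<omega>. ennreal ((X \<omega>/c + 1) * Z \<omega>) \<partial>M) \<le> ennreal ((1/c + 1) * (2 + 2*C))"
proof -
  have "(\<integral>\<^sup>+\<omega>. ennreal ((X \<omega>/c + 1) * Z \<omega>) \<partial>M)
      \<le> (\<integral>\<^sup>+\<omega>. ennreal (1/c + 1) * (2 + ennreal (X \<omega> powr (1 + \<epsilon>)) + ennreal (Z \<omega> powr (1 + \<epsilon>))) \<partial>M)"
  proof (rule nn_integral_mono)
    fix \<omega>
    have "ennreal ((X \<omega>/c + 1) * Z \<omega>) \<le> ennreal ((1/c + 1) * (2 + X \<omega> powr (1 + \<epsilon>) + Z \<omega> powr (1 + \<epsilon>)))"
      using mult_le_powr_moments[OF nonneg(1,2) assms(5,6)] by (rule ennreal_leI)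
    then show "ennreal ((X \<omega>/c + 1) * Z \<omega>) \<le> ennreal (1/c + 1) * (2 + ennreal (X \<omega> powr (1 + \<epsilon>)) + ennreal (Z \<omega> powr (1 + \<epsilon>)))"
      using assms(5) by (simp add: ennreal_mult)
  qed
  also have "\<dots> = ennreal (1/c + 1) * (2 + (\<integral>\<^sup>+\<omega>. ennreal (X \<omega> powr (1 + \<epsilon>)) \<partial>M) + (\<integral>\<^sup>+\<omega>. ennreal (Z \<omega> powr (1 + \<epsilon>)) \<partial>M))"
    by (simp add: nn_integral_cmult nn_integral_add emeasure_space_1)
  also have "\<dots> \<le> ennreal (1/c + 1) * (2 + ennreal C + ennreal C)"
    using moment_X moment_Z by (intro mult_left_mono add_mono) auto
  also have "\<dots> = ennreal ((1/c + 1) * (2 + 2*C))"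
    using assms(5,7) by (simp add: ennreal_mult' add.assoc flip: ennreal_plus ennreal_numeral)
  finally show ?thesis .
qed

lemma AE_summable_double_series:
  fixes Z :: "nat \<Rightarrow> nat \<Rightarrow> 'a \<Rightarrow> real" and b :: "nat \<Rightarrow> nat \<Rightarrow> real"
  assumes [measurable]: "\<And>l k. Z l k \<in> borel_measurable M"
    and Z_nonneg: "\<And>l k \<omega>. 0 \<le> Z l k \<omega>" and b_nonneg: "\<And>l k. 0 \<le> b l k"
    and integral_le: "\<And>l k. (\<integral>\<^sup>+\<omega>. ennreal (Z l k \<omega>) \<partial>M) \<le> ennreal (b l k)"
    and b_summable: "\<And>l. summable (b l)" "summable (\<lambda>l. suminf (b l))"
  shows "AE \<omega> in M. (\<forall>l. summable (\<lambda>k. Z l k \<omega>)) \<and> summable (\<lambda>l. \<Sum>k. Z l k \<omega>)"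
proof -
  define G where "G \<omega> = (\<Sum>l. \<Sum>k. ennreal (Z l k \<omega>))" for \<omega>
  have "(\<integral>\<^sup>+\<omega>. G \<omega> \<partial>M) = (\<Sum>l. \<Sum>k. \<integral>\<^sup>+\<omega>. ennreal (Z l k \<omega>) \<partial>M)"
    unfolding G_def by (simp add: nn_integral_suminf)
  also have "\<dots> \<le> (\<Sum>l. \<Sum>k. ennreal (b l k))"
    by (intro suminf_le summableI integral_le)
  also have "\<dots> = (\<Sum>l. ennreal (suminf (b l)))"
    using b_summable(1) b_nonneg by (simp add: suminf_ennreal2)
  also have "\<dots> < \<top>"
    using b_summable b_nonneg by (simp add: suminf_ennreal2 suminf_nonneg)
  finally have "AE \<omega> in M. G \<omega> \<noteq> \<infinity>"
    by (intro nn_integral_noteq_infinite) (auto simp: G_def)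
  then show ?thesis
  proof eventually_elim
    fix \<omega> assume "G \<omega> \<noteq> \<infinity>"
    then have inner_finite: "(\<Sum>k. ennreal (Z l k \<omega>)) \<noteq> \<top>" for l
      unfolding G_def using ennreal_suminf_lessD[of "\<lambda>l. \<Sum>k. ennreal (Z l k \<omega>)" \<top> l]
      by (simp add: top.not_eq_extremum)
    then have inner: "summable (\<lambda>k. Z l k \<omega>)" for l
      using Z_nonneg by (intro summable_suminf_not_top) auto
    have "(\<Sum>k. ennreal (Z l k \<omega>)) = ennreal (\<Sum>k. Z l k \<omega>)" for l
      using inner Z_nonneg by (simp add: suminf_ennreal2)
    then have "summable (\<lambda>l. \<Sum>k. Z l k \<omega>)"
      using \<open>G \<omega> \<noteq> \<infinity>\<close> inner Z_nonneg unfolding G_def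
      by (intro summable_suminf_not_top) (auto intro: suminf_nonneg)
    with inner show "(\<forall>l. summable (\<lambda>k. Z l k \<omega>)) \<and> summable (\<lambda>l. \<Sum>k. Z l k \<omega>)" by blast
  qed
qed

definition trunc_err :: "(nat \<Rightarrow> real) \<Rightarrow> (int \<Rightarrow> 'a \<Rightarrow> nat) \<Rightarrow> nat \<Rightarrow> 'a \<Rightarrow> nat \<Rightarrow> real" where
  "trunc_err \<alpha> Y t \<omega> k = \<alpha> (Suc k) * (if Suc k < t then 0 else real (Y (int t - int (Suc k)) \<omega>))"

lemma trunc_err_eq:
  "trunc_err \<alpha> Y t \<omega> =
     (\<lambda>k. \<alpha> (Suc k) * \<bar>real (trunc_past Y t \<omega> (Suc k)) - real (past Y (int t) \<omega> (Suc k))\<bar>)"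
  by (auto simp: fun_eq_iff trunc_err_def trunc_past_def past_def)

lemma trunc_err_nonneg: "(\<And>k. 0 \<le> \<alpha> k) \<Longrightarrow> 0 \<le> trunc_err \<alpha> Y t \<omega> k"
  by (simp add: trunc_err_def)

lemma abs_lamhat_lam_le:
  assumes "seq_lipschitz \<alpha> (f \<theta>)" and "summable (trunc_err \<alpha> Y t \<omega>)"
  shows "\<bar>lamhat f Y \<theta> t \<omega> - lam f Y \<theta> (int t) \<omega>\<bar> \<le> suminf (trunc_err \<alpha> Y t \<omega>)"
  using assms unfolding seq_lipschitz_def lamhat_def lam_def trunc_err_eq by auto

lemma abs_Lnhat_Ln_le:
  assumes "0 < c" and f_ge: "\<And>y. c \<le> f \<theta> y" and lip: "seq_lipschitz \<alpha> (f \<theta>)"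
    and summable: "\<And>l. summable (trunc_err \<alpha> Y (Suc l) \<omega>)"
  shows "\<bar>Lnhat f Y \<theta> n \<omega> - Ln f Y \<theta> n \<omega>\<bar>
    \<le> (\<Sum>l<n. (real (Y (int (Suc l)) \<omega>)/c + 1) * suminf (trunc_err \<alpha> Y (Suc l) \<omega>))"
proof -
  define ell_hat where "ell_hat = (\<lambda>t. real (Y (int t) \<omega>) * ln (lamhat f Y \<theta> t \<omega>) - lamhat f Y \<theta> t \<omega>)"
  define ell where "ell = (\<lambda>t. real (Y (int t) \<omega>) * ln (lam f Y \<theta> (int t) \<omega>) - lam f Y \<theta> (int t) \<omega>)"
  have term_le: "\<bar>ell_hat (Suc l) - ell (Suc l)\<bar>
      \<le> (real (Y (int (Suc l)) \<omega>)/c + 1) * suminf (trunc_err \<alpha> Y (Suc l) \<omega>)" for l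
  proof -
    have "\<bar>ell_hat (Suc l) - ell (Suc l)\<bar>
        \<le> (real (Y (int (Suc l)) \<omega>)/c + 1) * \<bar>lamhat f Y \<theta> (Suc l) \<omega> - lam f Y \<theta> (int (Suc l)) \<omega>\<bar>"
      unfolding ell_hat_def ell_def
      by (rule abs_poisson_loglik_diff_le) (use \<open>0 < c\<close> f_ge in \<open>auto simp: lamhat_def lam_def\<close>)
    also have "\<dots> \<le> (real (Y (int (Suc l)) \<omega>)/c + 1) * suminf (trunc_err \<alpha> Y (Suc l) \<omega>)"
      using abs_lamhat_lam_le[where f = f and \<theta> = \<theta>, OF lip summable] \<open>0 < c\<close> by (intro mult_left_mono) auto
    finally show ?thesis .
  qed
  have "Lnhat f Y \<theta> n \<omega> - Ln f Y \<theta> n \<omega> = sum ell_hat {1..n} - sum ell {1..n}"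
    by (simp only: Lnhat_def Ln_def ell_hat_def ell_def)
  also have "\<dots> = (\<Sum>l<n. ell_hat (Suc l) - ell (Suc l))"
    by (simp only: sum_subtractf sum_bounds_lt_plus1)
  finally have "\<bar>Lnhat f Y \<theta> n \<omega> - Ln f Y \<theta> n \<omega>\<bar> \<le> (\<Sum>l<n. \<bar>ell_hat (Suc l) - ell (Suc l)\<bar>)"
    by simp
  also have "\<dots> \<le> (\<Sum>l<n. (real (Y (int (Suc l)) \<omega>)/c + 1) * suminf (trunc_err \<alpha> Y (Suc l) \<omega>))"
    by (intro sum_mono term_le)
  finally show ?thesis .
qed

lemma (in prob_space) AE_summable_weighted_trunc_err:
  fixes w \<alpha> :: "nat \<Rightarrow> real" and Y :: "int \<Rightarrow> 'a \<Rightarrow> nat"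
  assumes Y_meas: "\<And>t. Y t \<in> measurable M (count_space UNIV)"
    and moment: "\<And>t. (\<integral>\<^sup>+\<omega>. ennreal (real (Y t \<omega>) powr (1 + \<epsilon>)) \<partial>M) \<le> ennreal C"
    and "0 < c" "1 \<le> \<epsilon>" "0 \<le> C"
    and \<alpha>_nonneg: "\<And>k. 0 \<le> \<alpha> k" and \<alpha>_summable: "summable (\<lambda>k. \<alpha> (Suc k))"
    and w_pos: "\<And>l. 0 < w l" and w_summable: "summable (\<lambda>l. w l * (\<Sum>k. \<alpha> (k + Suc l)))"
  shows "AE \<omega> in M. (\<forall>l. summable (trunc_err \<alpha> Y (Suc l) \<omega>)) \<and>
    summable (\<lambda>l. w l * ((real (Y (int (Suc l)) \<omega>)/c + 1) * suminf (trunc_err \<alpha> Y (Suc l) \<omega>)))"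
proof -
  define K where "K = (1/c + 1) * (2 + 2*C)"
  define a where "a l \<omega> = w l * (real (Y (int (Suc l)) \<omega>)/c + 1)" for l \<omega>
  define b where "b l k = w l * K * (if k < l then 0 else \<alpha> (Suc k))" for l k
  have a_pos: "0 < a l \<omega>" for l \<omega>
    unfolding a_def using w_pos \<open>0 < c\<close> by (simp add: add_nonneg_pos)
  have K_nonneg: "0 \<le> K" unfolding K_def using \<open>0 < c\<close> \<open>0 \<le> C\<close> by simp
  have [measurable]: "(\<lambda>\<omega>. real (Y t \<omega>)) \<in> borel_measurable M" for t
    using Y_meas by (rule measurable_compose) simp
  have integral_le: "(\<integral>\<^sup>+\<omega>. ennreal (a l \<omega> * trunc_err \<alpha> Y (Suc l) \<omega> k) \<partial>M) \<le> ennreal (b l k)" for l k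
  proof (cases "k < l")
    case False
    have weight_nonneg: "0 \<le> w l * \<alpha> (Suc k)" using w_pos[of l] \<alpha>_nonneg[of "Suc k"] by simp
    have "a l \<omega> * trunc_err \<alpha> Y (Suc l) \<omega> k
        = (w l * \<alpha> (Suc k)) * ((real (Y (int (Suc l)) \<omega>)/c + 1) * real (Y (int l - int k) \<omega>))" for \<omega>
      using False by (simp add: a_def trunc_err_def)
    then have "(\<integral>\<^sup>+\<omega>. ennreal (a l \<omega> * trunc_err \<alpha> Y (Suc l) \<omega> k) \<partial>M)
        = ennreal (w l * \<alpha> (Suc k)) *
          (\<integral>\<^sup>+\<omega>. ennreal ((real (Y (int (Suc l)) \<omega>)/c + 1) * real (Y (int l - int k) \<omega>)) \<partial>M)"
      using weight_nonneg \<open>0 < c\<close> by (simp add: ennreal_mult nn_integral_cmult)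
    also have "\<dots> \<le> ennreal (w l * \<alpha> (Suc k)) * ennreal K"
      unfolding K_def
      by (intro mult_left_mono nn_integral_mixed_moment_le) (use assms(3-5) moment in auto)
    also have "\<dots> = ennreal (b l k)"
      using False weight_nonneg K_nonneg by (simp add: b_def ennreal_mult' mult_ac)
    finally show ?thesis .
  qed (simp add: trunc_err_def b_def)
  have tail_sums: "b l sums (w l * K * (\<Sum>k. \<alpha> (k + Suc l)))" for l
  proof -
    have "summable (\<lambda>k. \<alpha> (k + Suc l))"
      using \<alpha>_summable summable_iff_shift[of "\<lambda>k. \<alpha> (Suc k)" l] by simp
    then have "(\<lambda>k. b l (k + l)) sums (w l * K * (\<Sum>k. \<alpha> (k + Suc l)))"
      unfolding b_def by (simp add: sums_mult summable_sums)
    then have "b l sums (w l * K * (\<Sum>k. \<alpha> (k + Suc l)) + (\<Sum>k<l. b l k))"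
      by (rule sums_iff_shift[THEN iffD1])
    then show ?thesis by (simp add: b_def)
  qed
  have "AE \<omega> in M. (\<forall>l. summable (\<lambda>k. a l \<omega> * trunc_err \<alpha> Y (Suc l) \<omega> k)) \<and>
      summable (\<lambda>l. \<Sum>k. a l \<omega> * trunc_err \<alpha> Y (Suc l) \<omega> k)"
  proof (rule AE_summable_double_series[OF _ _ _ integral_le])
    show "(\<lambda>\<omega>. a l \<omega> * trunc_err \<alpha> Y (Suc l) \<omega> k) \<in> borel_measurable M" for l k
      unfolding a_def trunc_err_def by measurable
    show "0 \<le> a l \<omega> * trunc_err \<alpha> Y (Suc l) \<omega> k" for l k \<omega>
      by (intro mult_nonneg_nonneg less_imp_le[OF a_pos] trunc_err_nonneg \<alpha>_nonneg)
    show "0 \<le> b l k" for l k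
      unfolding b_def using w_pos[of l] K_nonneg \<alpha>_nonneg[of "Suc k"] by simp
    show "summable (b l)" for l
      using tail_sums by (rule sums_summable)
    show "summable (\<lambda>l. suminf (b l))"
      using summable_mult[OF w_summable, of K] by (simp add: sums_unique[OF tail_sums, symmetric] mult_ac)
  qed
  then show ?thesis
  proof eventually_elim
    case (elim \<omega>)
    then have "summable (trunc_err \<alpha> Y (Suc l) \<omega>)" for l
      using a_pos[of l \<omega>] summable_cmult_iff[of "a l \<omega>"] by force
    moreover have "(\<Sum>k. a l \<omega> * trunc_err \<alpha> Y (Suc l) \<omega> k)
        = w l * ((real (Y (int (Suc l)) \<omega>)/c + 1) * suminf (trunc_err \<alpha> Y (Suc l) \<omega>))" for l
      using calculation by (simp add: suminf_mult a_def)
    ultimately show ?case using elim by simp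
  qed
qed

lemma tendsto_SUP_ennreal_zero:
  fixes g :: "'b \<Rightarrow> nat \<Rightarrow> real"
  assumes "\<forall>\<^sub>F n in sequentially. \<forall>\<theta>\<in>\<Theta>. g \<theta> n \<le> u n" and "u \<longlonglongrightarrow> 0"
  shows "(\<lambda>n. SUP \<theta>\<in>\<Theta>. ennreal (g \<theta> n)) \<longlonglongrightarrow> 0"
proof (rule tendsto_sandwich[of "\<lambda>_. 0" _ _ "\<lambda>n. ennreal (u n)"])
  show "\<forall>\<^sub>F n in sequentially. (SUP \<theta>\<in>\<Theta>. ennreal (g \<theta> n)) \<le> ennreal (u n)"
    using assms(1) by eventually_elim (auto intro: SUP_least ennreal_leI)
  show "(\<lambda>n. ennreal (u n)) \<longlonglongrightarrow> 0"
    using tendsto_ennrealI[OF assms(2)] by simp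
qed auto

theorem lemma1:
  fixes M :: "'a measure"
    and Y :: "int \<Rightarrow> 'a \<Rightarrow> nat"
    and f :: "real^'d \<Rightarrow> (nat \<Rightarrow> nat) \<Rightarrow> real"
    and Df :: "real^'d \<Rightarrow> (nat \<Rightarrow> nat) \<Rightarrow> real^'d"
    and D2f :: "real^'d \<Rightarrow> (nat \<Rightarrow> nat) \<Rightarrow> real^'d^'d"
    and \<Theta> :: "(real^'d) set"
    and \<theta>s :: "real^'d"
    and Ms :: "'d set set"
    and ms :: "'d set"
    and p :: "real \<Rightarrow> nat pmf"
    and \<epsilon> C c :: real
    and \<alpha>0 \<alpha>1 \<alpha>2 :: "nat \<Rightarrow> real"
    and \<kappa> :: "nat \<Rightarrow> real"
  assumes M: "prob_space M"
    and Y_meas: "\<And>t. Y t \<in> measurable M (count_space UNIV)"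
    and cond_law: "\<And>t y. AE \<omega> in M.
         real_cond_exp M (Fpast M Y t) (\<lambda>\<omega>. indicator {y} (Y t \<omega>)) \<omega> = pmf (p (lam f Y \<theta>s t \<omega>)) y"
    and cond_mean: "\<And>t. AE \<omega> in M.
         real_cond_exp M (Fpast M Y t) (\<lambda>\<omega>. real (Y t \<omega>)) \<omega> = lam f Y \<theta>s t \<omega>"
    and \<Theta>_compact: "compact \<Theta>"
    and f_meas: "\<And>\<theta>. \<theta> \<in> \<Theta> \<Longrightarrow> f \<theta> \<in> borel_measurable seqspace"
    and f_nonneg: "\<And>\<theta> y. \<theta> \<in> \<Theta> \<Longrightarrow> 0 \<le> f \<theta> y"
    and stat: "strictly_stationary M Y"
    and erg: "ergodic_process M Y"
    and \<epsilon>: "\<epsilon> > 1" and C: "C > 0"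
    and moment: "\<And>t. (\<integral>\<^sup>+\<omega>. ennreal (real (Y t \<omega>) powr (1 + \<epsilon>)) \<partial>M) < ennreal C"
    and ms_in: "ms \<in> Ms"
    and \<theta>s_in: "\<theta>s \<in> {\<theta> \<in> \<Theta>. \<forall>i. i \<notin> ms \<longrightarrow> \<theta> $ i = 0}"
    and \<alpha>0_nonneg: "\<And>k. 0 \<le> \<alpha>0 k"
    and \<alpha>0_sum: "summable (\<lambda>k. \<alpha>0 (Suc k))" "(\<Sum>k. \<alpha>0 (Suc k)) < 1"
    and A0_Theta: "\<And>\<theta>. \<theta> \<in> \<Theta> \<Longrightarrow> seq_lipschitz \<alpha>0 (f \<theta>)"
    and f_deriv: "\<And>y \<theta>. \<theta> \<in> \<Theta> \<Longrightarrow>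
         ((\<lambda>\<theta>'. f \<theta>' y) has_derivative (\<lambda>h. Df \<theta> y \<bullet> h)) (at \<theta> within \<Theta>)"
    and Df_cont: "\<And>y. continuous_on \<Theta> (\<lambda>\<theta>. Df \<theta> y)"
    and \<alpha>1_nonneg: "\<And>k. 0 \<le> \<alpha>1 k"
    and \<alpha>1_sum: "summable (\<lambda>k. \<alpha>1 (Suc k))"
    and A1_Theta: "\<And>\<theta>. \<theta> \<in> \<Theta> \<Longrightarrow> seq_lipschitz \<alpha>1 (Df \<theta>)"
    and Df_deriv: "\<And>y \<theta>. \<theta> \<in> \<Theta> \<Longrightarrow>
         ((\<lambda>\<theta>'. Df \<theta>' y) has_derivative (\<lambda>h. D2f \<theta> y *v h)) (at \<theta> within \<Theta>)"
    and D2f_cont: "\<And>y. continuous_on \<Theta> (\<lambda>\<theta>. D2f \<theta> y)"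
    and \<alpha>2_nonneg: "\<And>k. 0 \<le> \<alpha>2 k"
    and \<alpha>2_sum: "summable (\<lambda>k. \<alpha>2 (Suc k))"
    and A2_Theta: "\<And>\<theta>. \<theta> \<in> \<Theta> \<Longrightarrow> seq_lipschitz \<alpha>2 (D2f \<theta>)"
    and A0_ident: "\<And>\<theta> \<theta>' t. \<theta> \<in> \<Theta> \<Longrightarrow> \<theta>' \<in> \<Theta> \<Longrightarrow>
         (AE \<omega> in M. f \<theta> (past Y t \<omega>) = f \<theta>' (past Y t \<omega>)) \<Longrightarrow> \<theta> = \<theta>'"
    and c_pos: "c > 0"
    and A0_lower: "\<And>\<theta> y. \<theta> \<in> \<Theta> \<Longrightarrow> c \<le> f \<theta> y"
    and A1: "\<exists>e>0. \<forall>\<theta>. (\<forall>i. i \<notin> ms \<longrightarrow> \<theta> $ i = 0) \<and> dist \<theta> \<theta>s < e \<longrightarrow> \<theta> \<in> \<Theta>"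
    and A3: "AE \<omega> in M.
         (\<lambda>t. SUP \<theta>\<in>\<Theta>. ennreal \<bar>lamhat f Y \<theta> t \<omega> - lam f Y \<theta> (int t) \<omega>\<bar>) \<longlonglongrightarrow> 0 \<and>
         (\<lambda>t. of_nat (Y (int t) \<omega>) * (SUP \<theta>\<in>\<Theta>. ennreal \<bar>lamhat f Y \<theta> t \<omega> - lam f Y \<theta> (int t) \<omega>\<bar>)) \<longlonglongrightarrow> 0"
    and A4_J: "\<And>t i j. integrable M (\<lambda>\<omega>.
         (1 / lam f Y \<theta>s t \<omega>) * (Df \<theta>s (past Y t \<omega>) $ i) * (Df \<theta>s (past Y t \<omega>) $ j))"
    and A4_I: "\<And>t i j. integrable M (\<lambda>\<omega>.
         real_cond_exp M (Fpast M Y t) (\<lambda>\<omega>. (real (Y t \<omega>) - lam f Y \<theta>s t \<omega>)\<^sup>2) \<omega>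
           / (lam f Y \<theta>s t \<omega>)\<^sup>2 * (Df \<theta>s (past Y t \<omega>) $ i) * (Df \<theta>s (past Y t \<omega>) $ j))"
    and A5: "\<And>t (v::real^'d). (AE \<omega> in M. v \<bullet> Df \<theta>s (past Y t \<omega>) = 0) \<Longrightarrow> v = 0"
    and A6: "\<exists>V. open V \<and> \<theta>s \<in> V \<and> (\<forall>t i j.
         (\<integral>\<^sup>+\<omega>. (SUP \<theta>\<in>V \<inter> \<Theta>. ennreal \<bar>ell_hess f Df D2f Y \<theta> t \<omega> i j\<bar>) \<partial>M) < \<infinity>)"
    and A7: "\<exists>h>1/2.
         (\<exists>K. \<forall>\<^sub>F t in sequentially.
            (SUP \<theta>\<in>\<Theta>. \<integral>\<^sup>+\<omega>. ennreal (norm (Df \<theta> (trunc_past Y t \<omega>) - Df \<theta> (past Y (int t) \<omega>))) \<partial>M)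
              \<le> ennreal (K * real t powr (-h))) \<and>
         (AE \<omega> in M. \<exists>K. \<forall>\<^sub>F t in sequentially.
            of_nat (Y (int t) \<omega>) *
            (SUP \<theta>\<in>\<Theta>. \<integral>\<^sup>+\<omega>'. ennreal (norm (Df \<theta> (trunc_past Y t \<omega>') - Df \<theta> (past Y (int t) \<omega>'))) \<partial>M)
              \<le> ennreal (K * real t powr (-h))) \<and>
         (AE \<omega> in M. \<exists>K. \<forall>\<^sub>F t in sequentially.
            (SUP \<theta>\<in>\<Theta>. ennreal \<bar>lamhat f Y \<theta> t \<omega> - lam f Y \<theta> (int t) \<omega>\<bar>) *
            (SUP \<theta>\<in>\<Theta>. max
               (\<integral>\<^sup>+\<omega>'. ennreal (norm ((1 / lamhat f Y \<theta> t \<omega>') *\<^sub>R Df \<theta> (trunc_past Y t \<omega>'))) \<partial>M)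
               (\<integral>\<^sup>+\<omega>'. ennreal (norm ((1 / lam f Y \<theta> (int t) \<omega>') *\<^sub>R Df \<theta> (past Y (int t) \<omega>'))) \<partial>M)) *
            of_nat (Y (int t) \<omega>)
              \<le> ennreal (K * real t powr (-h)))"
    and \<kappa>_mono: "incseq \<kappa>"
    and \<kappa>_pos: "\<And>n. n \<ge> 1 \<Longrightarrow> 0 < \<kappa> n"
    and \<kappa>_less: "\<And>n. n \<ge> 1 \<Longrightarrow> \<kappa> n < real n"
    and \<kappa>_inf: "filterlim \<kappa> at_top sequentially"
    and \<kappa>_o: "(\<lambda>n. \<kappa> n / real n) \<longlonglongrightarrow> 0"
    and \<kappa>_sum0: "summable (\<lambda>l. (1 / \<kappa> (Suc l)) * (\<Sum>k. \<alpha>0 (k + Suc l)))"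
    and \<kappa>_sum1: "summable (\<lambda>l. (1 / \<kappa> (Suc l)) * (\<Sum>k. \<alpha>1 (k + Suc l)))"
    and \<kappa>_sum2: "summable (\<lambda>l. (1 / \<kappa> (Suc l)) * (\<Sum>k. \<alpha>2 (k + Suc l)))"
  shows "AE \<omega> in M.
     (\<lambda>n. SUP \<theta>\<in>\<Theta>. ennreal (\<bar>Lnhat f Y \<theta> n \<omega> - Ln f Y \<theta> n \<omega>\<bar> / \<kappa> n)) \<longlonglongrightarrow> 0"
proof -
  interpret prob_space M by (rule M)
  have "AE \<omega> in M. (\<forall>l. summable (trunc_err \<alpha>0 Y (Suc l) \<omega>)) \<and>
      summable (\<lambda>l. 1 / \<kappa> (Suc l) * ((real (Y (int (Suc l)) \<omega>)/c + 1) * suminf (trunc_err \<alpha>0 Y (Suc l) \<omega>)))"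
    using moment \<epsilon> C \<kappa>_pos
    by (intro AE_summable_weighted_trunc_err[OF Y_meas _ c_pos _ _ \<alpha>0_nonneg \<alpha>0_sum(1) _ \<kappa>_sum0])
      (auto intro: less_imp_le)
  then show ?thesis
  proof eventually_elim
    case (elim \<omega>)
    then have err_summable: "\<And>l. summable (trunc_err \<alpha>0 Y (Suc l) \<omega>)" by blast
    define x where "x l = (real (Y (int (Suc l)) \<omega>)/c + 1) * suminf (trunc_err \<alpha>0 Y (Suc l) \<omega>)" for l
    have bound: "\<bar>Lnhat f Y \<theta> n \<omega> - Ln f Y \<theta> n \<omega>\<bar> \<le> (\<Sum>l<n. x l)" if "\<theta> \<in> \<Theta>" for \<theta> n
      unfolding x_def using that
      by (intro abs_Lnhat_Ln_le[where f = f] c_pos A0_lower A0_Theta err_summable)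
    have "0 \<le> x l" for l
      unfolding x_def using err_summable c_pos
      by (intro mult_nonneg_nonneg suminf_nonneg trunc_err_nonneg \<alpha>0_nonneg) auto
    moreover have "summable (\<lambda>l. x l / \<kappa> (Suc l))"
      using elim by (simp add: x_def)
    ultimately have "(\<lambda>n. (\<Sum>l<n. x l) / \<kappa> n) \<longlonglongrightarrow> 0"
      by (intro kronecker_lemma_nonneg \<kappa>_mono \<kappa>_pos \<kappa>_inf)
    moreover have "\<forall>\<^sub>F n in sequentially. \<forall>\<theta>\<in>\<Theta>.
        \<bar>Lnhat f Y \<theta> n \<omega> - Ln f Y \<theta> n \<omega>\<bar> / \<kappa> n \<le> (\<Sum>l<n. x l) / \<kappa> n"
      using eventually_ge_at_top[of 1] by eventually_elim (auto intro!: divide_right_mono bound less_imp_le[OF \<kappa>_pos])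
    ultimately show ?case by (intro tendsto_SUP_ennreal_zero)
  qed
qed

end
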